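(* Let $X_0^*$ be a $\{1,2,\dots\}$-valued random variable with $\mathbf P(X_0^*\ge2)>0$ and $\mathbf E(X_0^*m^{X_0^*})<\infty$, and let $X_0$ have law $(1-p)\delta_0+pP_{X_0^*}$. If $p\in[p_c,1)$, then the system $(X_n)_{n\ge0}$ is $0$-regular with coefficient $\chi=1-p$.
   Context: Fix an integer $m\ge2$. A recursive system $(X_n)_{n\ge0}$: $X_{n+1}$ has the law of $(X_{n,1}+\cdots+X_{n,m}-1)^+$ with $X_{n,i}$ independent copies of $X_n$. $p_c:=\frac{1}{1+\mathbf E\{[(m-1)X_0^*-1]m^{X_0^*}\}}$; $p\ge p_c$ is equivalent to $\mathbf E\{[(m-1)X_0-1]m^{X_0}\}\ge0$. Regularity: for a $\mathbb Z_+$-valued random variable $\zeta$ with $\mathbf E(\zeta m^\zeta)<\infty$ and $\mathbf P(\zeta\ge2)>0$, set $\Lambda(\zeta):=\mathbf E(\zeta^3m^\zeta)\in(0,\infty]$ and, for integers $k\ge1$, $\Xi_k(\zeta):=\mathbf E[(\zeta\wedge k)^2((m-1)\zeta-1)m^\zeta]$. For $\beta\in[0,2]$ and $\chi\in(0,1]$, $\zeta$ is $\beta$-regular with coefficient $\chi$ if $\Xi_k(\zeta)\ge\chi\min\{\Lambda(\zeta),k^\beta\}$ for all integers $k\ge1$; a system is $\beta$-regular with coefficient $\chi$ if its $X_0$ is. *)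

theory Defs
  imports "HOL-Probability.Probability"
begin

text \<open>Laws of Z_+-valued random variables are modelled as nat pmfs. Expectations are
  Lebesgue integrals w.r.t. the pmf (nonnegative integrals in ennreal where the value may be infinite).\<close>

definition Lambda :: "nat \<Rightarrow> nat pmf \<Rightarrow> ennreal" where
  "Lambda m \<zeta> = (\<integral>\<^sup>+ x. ennreal (real x ^ 3 * real m ^ x) \<partial>measure_pmf \<zeta>)"

definition Xi :: "nat \<Rightarrow> nat \<Rightarrow> nat pmf \<Rightarrow> real" where
  "Xi m k \<zeta> = measure_pmf.expectation \<zeta>
      (\<lambda>x. real (min x k) ^ 2 * ((real m - 1) * real x - 1) * real m ^ x)"

definition beta_regular :: "nat \<Rightarrow> real \<Rightarrow> real \<Rightarrow> nat pmf \<Rightarrow> bool" where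
  "beta_regular m \<beta> chi \<zeta> \<longleftrightarrow>
     integrable (measure_pmf \<zeta>) (\<lambda>x. real x * real m ^ x) \<and>
     measure_pmf.prob \<zeta> {2..} > 0 \<and>
     0 \<le> \<beta> \<and> \<beta> \<le> 2 \<and> 0 < chi \<and> chi \<le> 1 \<and>
     (\<forall>k::nat. k \<ge> 1 \<longrightarrow>
        ereal (Xi m k \<zeta>) \<ge> ereal chi * min (enn2ereal (Lambda m \<zeta>)) (ereal (real k powr \<beta>)))"

definition p_crit :: "nat \<Rightarrow> nat pmf \<Rightarrow> real" where
  "p_crit m X = 1 / (1 + measure_pmf.expectation X (\<lambda>x. ((real m - 1) * real x - 1) * real m ^ x))"

definition mix_law :: "real \<Rightarrow> nat pmf \<Rightarrow> nat pmf" where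
  "mix_law p X = bind_pmf (bernoulli_pmf p) (\<lambda>b. if b then X else return_pmf 0)"

end

theory Submission
  imports Defs
begin

text \<open>Mixing with an atom at 0 scales every moment of \<open>X0*\<close> by \<open>p\<close>, and the weight in
  \<open>\<Xi>_k\<close> vanishes at 0, so \<open>\<Xi>_k(X0) = p \<Xi>_k(X0*)\<close>. As \<open>X0* \<ge> 1\<close> and \<open>k \<ge> 1\<close>, the factor
  \<open>(min X0* k)\<^sup>2\<close> is at least 1, hence \<open>\<Xi>_k(X0) \<ge> p E{[(m-1)X0* - 1] m^X0*} \<ge> 1 - p\<close>, the last
  inequality being a rearrangement of \<open>p \<ge> p_c\<close>. For \<open>\<beta> = 0\<close> the other side of the
  regularity condition is at most \<open>\<chi> = 1 - p\<close>.\<close>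

lemma nn_integral_mix_law:
  assumes "0 \<le> p" "p \<le> 1"
  shows "(\<integral>\<^sup>+x. f x \<partial>measure_pmf (mix_law p X))
           = ennreal p * (\<integral>\<^sup>+x. f x \<partial>measure_pmf X) + ennreal (1 - p) * f 0"
  unfolding mix_law_def nn_integral_bind_pmf
  using assms
  by (subst nn_integral_measure_pmf_support[of UNIV])
     (auto simp: UNIV_bool nn_integral_return mult.commute)

lemma
  fixes f :: "nat \<Rightarrow> real"
  assumes p: "0 \<le> p" "p \<le> 1"
    and int: "integrable (measure_pmf X) f" and nonneg: "\<And>x. 0 \<le> f x"
  shows integrable_mix_law: "integrable (measure_pmf (mix_law p X)) f"
    and expectation_mix_law:
      "measure_pmf.expectation (mix_law p X) f = p * measure_pmf.expectation X f + (1 - p) * f 0"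
proof -
  have E_nonneg: "0 \<le> measure_pmf.expectation X f"
    using nonneg by (intro integral_nonneg_AE) auto
  have "(\<integral>\<^sup>+x. ennreal (f x) \<partial>measure_pmf X) = ennreal (measure_pmf.expectation X f)"
    using int nonneg by (intro nn_integral_eq_integral) auto
  then have "(\<integral>\<^sup>+x. ennreal (f x) \<partial>measure_pmf (mix_law p X))
               = ennreal (p * measure_pmf.expectation X f + (1 - p) * f 0)"
    using nn_integral_mix_law[OF p] p E_nonneg nonneg
    by (simp add: ennreal_mult ennreal_plus[symmetric])
  moreover have "0 \<le> p * measure_pmf.expectation X f + (1 - p) * f 0"
    using p E_nonneg nonneg by simp
  ultimately show "integrable (measure_pmf (mix_law p X)) f"
    and "measure_pmf.expectation (mix_law p X) f = p * measure_pmf.expectation X f + (1 - p) * f 0"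
    using nonneg by (auto intro!: integrableI_nn_integral_finite simp: integral_eq_nn_integral)
qed

lemma prob_mix_law_avoiding_0:
  assumes "0 \<le> p" "p \<le> 1" "0 \<notin> A"
  shows "measure_pmf.prob (mix_law p X) A = p * measure_pmf.prob X A"
proof -
  have "integrable (measure_pmf X) (indicator A :: nat \<Rightarrow> real)"
    by (rule measure_pmf.integrable_const_bound[where B=1]) auto
  then show ?thesis
    using expectation_mix_law[OF assms(1,2), of X "indicator A"] assms(3) by simp
qed

lemma criticality_weight_nonneg:
  assumes "m \<ge> 2" "x \<ge> 1"
  shows "0 \<le> ((real m - 1) * real x - 1) * real m ^ x"
proof -
  have "1 * 1 \<le> (real m - 1) * real x"
    using assms by (intro mult_mono) auto
  then show ?thesis by simp
qed

lemma integrable_bounded_times_criticality_weight: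
  fixes w :: "nat \<Rightarrow> real"
  assumes "m \<ge> 2" "set_pmf X \<subseteq> {1..}"
    and int: "integrable (measure_pmf X) (\<lambda>x. real x * real m ^ x)"
    and bounded: "\<And>x. \<bar>w x\<bar> \<le> B"
  shows "integrable (measure_pmf X) (\<lambda>x. w x * (((real m - 1) * real x - 1) * real m ^ x))"
proof (rule Bochner_Integration.integrable_bound)
  show "integrable (measure_pmf X) (\<lambda>x. B * (real m * (real x * real m ^ x)))"
    using int by simp
  show "AE x in measure_pmf X.
          norm (w x * (((real m - 1) * real x - 1) * real m ^ x))
            \<le> norm (B * (real m * (real x * real m ^ x)))"
    unfolding AE_measure_pmf_iff
  proof
    fix x assume "x \<in> set_pmf X"
    then have x: "x \<ge> 1" using assms(2) by auto
    let ?h = "((real m - 1) * real x - 1) * real m ^ x"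
    have h: "0 \<le> ?h" "?h \<le> real m * (real x * real m ^ x)"
      using criticality_weight_nonneg[OF assms(1) x] by (auto simp: algebra_simps)
    have "0 \<le> B" using abs_ge_zero[of "w x"] bounded[of x] by linarith
    have "norm (w x * ?h) = \<bar>w x\<bar> * ?h" by (metis real_norm_def abs_mult abs_of_nonneg h(1))
    also have "\<dots> \<le> B * ?h" using h bounded[of x] by (intro mult_right_mono) auto
    also have "\<dots> \<le> B * (real m * (real x * real m ^ x))"
      using h \<open>0 \<le> B\<close> by (intro mult_left_mono) auto
    finally show "norm (w x * ?h) \<le> norm (B * (real m * (real x * real m ^ x)))"
      using \<open>0 \<le> B\<close> by simp
  qed
qed simp

lemma Xi_ge_criticality_expectation:
  assumes "m \<ge> 2" "k \<ge> 1" "set_pmf X \<subseteq> {1..}"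
    and int: "integrable (measure_pmf X) (\<lambda>x. real x * real m ^ x)"
  shows "measure_pmf.expectation X (\<lambda>x. ((real m - 1) * real x - 1) * real m ^ x) \<le> Xi m k X"
  unfolding Xi_def mult.assoc
proof (rule integral_mono_AE)
  show "integrable (measure_pmf X) (\<lambda>x. ((real m - 1) * real x - 1) * real m ^ x)"
    using integrable_bounded_times_criticality_weight[OF assms(1,3) int, of "\<lambda>_. 1" 1] by simp
  show "integrable (measure_pmf X)
          (\<lambda>x. real (min x k) ^ 2 * (((real m - 1) * real x - 1) * real m ^ x))"
    by (rule integrable_bounded_times_criticality_weight[OF assms(1,3) int, of _ "real k ^ 2"])
       (auto intro: power_mono)
  show "AE x in measure_pmf X. ((real m - 1) * real x - 1) * real m ^ x
          \<le> real (min x k) ^ 2 * (((real m - 1) * real x - 1) * real m ^ x)"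
    unfolding AE_measure_pmf_iff
  proof
    fix x assume "x \<in> set_pmf X"
    then have x: "x \<ge> 1" using assms(3) by auto
    then have "1 \<le> real (min x k) ^ 2" using assms(2) by simp
    then show "((real m - 1) * real x - 1) * real m ^ x
                 \<le> real (min x k) ^ 2 * (((real m - 1) * real x - 1) * real m ^ x)"
      using mult_right_mono[OF _ criticality_weight_nonneg[OF assms(1) x]] by fastforce
  qed
qed

lemma Xi_mix_law:
  assumes "m \<ge> 2" "0 \<le> p" "p \<le> 1" "set_pmf X \<subseteq> {1..}"
    and int: "integrable (measure_pmf X) (\<lambda>x. real x * real m ^ x)"
  shows "Xi m k (mix_law p X) = p * Xi m k X"
proof -
  have nonneg: "0 \<le> real (min x k) ^ 2 * ((real m - 1) * real x - 1) * real m ^ x" for x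
    using criticality_weight_nonneg[OF assms(1), of x] by (cases "x = 0") (auto simp: mult.assoc)
  have "integrable (measure_pmf X) (\<lambda>x. real (min x k) ^ 2 * ((real m - 1) * real x - 1) * real m ^ x)"
    using integrable_bounded_times_criticality_weight[OF assms(1,4) int, of _ "real k ^ 2"]
    by (auto simp: mult.assoc intro: power_mono)
  then show ?thesis
    unfolding Xi_def using expectation_mix_law[OF assms(2,3)] nonneg by simp
qed

lemma
  assumes "m \<ge> 2" "set_pmf X \<subseteq> {1..}" "p_crit m X \<le> p"
  shows p_crit_le_imp_pos: "0 < p"
    and p_crit_le_imp_one_minus_le:
      "1 - p \<le> p * measure_pmf.expectation X (\<lambda>x. ((real m - 1) * real x - 1) * real m ^ x)"
proof -
  define E where "E = measure_pmf.expectation X (\<lambda>x. ((real m - 1) * real x - 1) * real m ^ x)"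
  have "0 \<le> E"
    unfolding E_def using criticality_weight_nonneg[OF assms(1)] assms(2)
    by (intro integral_nonneg_AE) (auto simp: AE_measure_pmf_iff)
  moreover have "1 / (1 + E) \<le> p" using assms(3) unfolding p_crit_def E_def .
  ultimately have "1 \<le> p * (1 + E)" by (simp add: field_simps)
  then show "1 - p \<le> p * E" by (simp add: algebra_simps)
  show "0 < p"
  proof (rule ccontr)
    assume "\<not> 0 < p"
    then have "p * (1 + E) \<le> 0" using \<open>0 \<le> E\<close> by (intro mult_nonpos_nonneg) auto
    with \<open>1 \<le> p * (1 + E)\<close> show False by simp
  qed
qed

lemma one_minus_p_le_Xi_mix_law:
  assumes "m \<ge> 2" "k \<ge> 1" "set_pmf X \<subseteq> {1..}"
    and "integrable (measure_pmf X) (\<lambda>x. real x * real m ^ x)"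
    and "p_crit m X \<le> p" "p \<le> 1"
  shows "1 - p \<le> Xi m k (mix_law p X)"
proof -
  have "1 - p \<le> p * measure_pmf.expectation X (\<lambda>x. ((real m - 1) * real x - 1) * real m ^ x)"
    by (rule p_crit_le_imp_one_minus_le[OF assms(1,3,5)])
  also have "\<dots> \<le> p * Xi m k X"
    using Xi_ge_criticality_expectation[OF assms(1-4)] p_crit_le_imp_pos[OF assms(1,3,5)]
    by (intro mult_left_mono) auto
  also have "\<dots> = Xi m k (mix_law p X)"
    using Xi_mix_law[OF assms(1) _ assms(6,3,4)] p_crit_le_imp_pos[OF assms(1,3,5)] by simp
  finally show ?thesis .
qed

theorem lemma2p1:
  fixes m :: nat and X0star :: "nat pmf" and p :: real
  assumes "m \<ge> 2"
    and "set_pmf X0star \<subseteq> {1..}"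
    and "measure_pmf.prob X0star {2..} > 0"
    and "integrable (measure_pmf X0star) (\<lambda>x. real x * real m ^ x)"
    and "p_crit m X0star \<le> p" and "p < 1"
  shows "beta_regular m 0 (1 - p) (mix_law p X0star)"
proof -
  have p: "0 < p" "p \<le> 1" using p_crit_le_imp_pos[OF assms(1,2,5)] assms(6) by auto
  have "ereal (1 - p) * min (enn2ereal (Lambda m (mix_law p X0star))) (ereal (real k powr 0))
          \<le> ereal (Xi m k (mix_law p X0star))" if "k \<ge> 1" for k
  proof -
    have "ereal (1 - p) * min (enn2ereal (Lambda m (mix_law p X0star))) (ereal (real k powr 0))
            \<le> ereal (1 - p) * ereal 1"
      using that p by (intro ereal_mult_left_mono) auto
    also have "\<dots> \<le> ereal (Xi m k (mix_law p X0star))"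
      using one_minus_p_le_Xi_mix_law[OF assms(1) that assms(2,4,5) p(2)] by simp
    finally show ?thesis .
  qed
  moreover have "integrable (measure_pmf (mix_law p X0star)) (\<lambda>x. real x * real m ^ x)"
    using integrable_mix_law[OF _ _ assms(4)] p by simp
  moreover have "measure_pmf.prob (mix_law p X0star) {2..} > 0"
    using prob_mix_law_avoiding_0[of p "{2..}" X0star] p assms(3) by simp
  ultimately show ?thesis unfolding beta_regular_def using p assms(6) by auto
qed

end
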